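(* Suppose (A3) each $f_t(\cdot)=f(\cdot;\boldsymbol\xi_t)$ is $L_c$-Lipschitz continuous, $\max\{d,T\}\ge3$, and $\delta\in(0,1)$. Then with probability at least $1-\delta$, the ZO gradient estimates $\hat{\mathbf g}_t=\hat\nabla f_t(\mathbf x_t)$, $t=1,\dots,T$, generated by ZO-AdaMM satisfy \[ \max_{t\in[T]}\|\hat{\mathbf g}_t\|_\infty\le 2L_c\sqrt{d\log(dT/\delta)} . \]
   Context: For a function $h:\mathbb R^d\to\mathbb R$, $\mu>0$, the ZO gradient estimate is $\hat\nabla h(\mathbf x)=(d/\mu)[h(\mathbf x+\mu\mathbf u)-h(\mathbf x)]\mathbf u$, where $\mathbf u$ is drawn uniformly from the unit sphere in $\mathbb R^d$, independently at each iteration. ZO-AdaMM (for $\min_{\mathbf x\in\mathcal X}\mathbb E_{\boldsymbol\xi}[f(\mathbf x;\boldsymbol\xi)]$, $\mathcal X$ closed convex): given $\mathbf x_1\in\mathcal X$, $\alpha_t$, $\beta_{1,t},\beta_2\in(0,1]$, $\mathbf m_0,\mathbf v_0,\hat{\mathbf v}_0$, for $t=1,\dots,T$: $\hat{\mathbf g}_t=\hat\nabla f_t(\mathbf x_t)$; $\mathbf m_t=\beta_{1,t}\mathbf m_{t-1}+(1-\beta_{1,t})\hat{\mathbf g}_t$; $\mathbf v_t=\beta_2\mathbf v_{t-1}+(1-\beta_2)\hat{\mathbf g}_t^2$; $\hat{\mathbf v}_t=\max(\hat{\mathbf v}_{t-1},\mathbf v_t)$, $\hat{\mathbf V}_t=\mathrm{diag}(\hat{\mathbf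 v}_t)$; $\mathbf x_{t+1}=\Pi_{\mathcal X,\sqrt{\hat{\mathbf V}_t}}(\mathbf x_t-\alpha_t\hat{\mathbf V}_t^{-1/2}\mathbf m_t)$, with elementwise operations and $\Pi_{\mathcal X,\mathbf H}(\mathbf a)=\arg\min_{\mathbf x\in\mathcal X}\|\sqrt{\mathbf H}(\mathbf x-\mathbf a)\|_2^2$. *)

theory Defs
  imports "HOL-Analysis.Analysis" "HOL-Probability.Probability"
begin

text \<open>Uniform distribution on the unit sphere of R^d (d = CARD('n)):
  the radial projection of the uniform distribution on the open unit ball.\<close>
definition unif_sphere :: "(real ^ 'n) measure" where
  "unif_sphere = distr (uniform_measure lborel (ball 0 1)) borel (\<lambda>x. x /\<^sub>R norm x)"

definition zo_grad :: "real \<Rightarrow> (real ^ 'n \<Rightarrow> real) \<Rightarrow> real ^ 'n \<Rightarrow> real ^ 'n \<Rightarrow> real ^ 'n" where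
  "zo_grad mu h x u = (real CARD('n) / mu * (h (x + mu *\<^sub>R u) - h x)) *\<^sub>R u"

definition wproj :: "(real ^ 'n) set \<Rightarrow> real ^ 'n \<Rightarrow> real ^ 'n \<Rightarrow> real ^ 'n" where
  "wproj X hh a = (SOME x. x \<in> X \<and>
     (\<forall>y\<in>X. (norm (\<chi> i. sqrt (hh $ i) * (x $ i - a $ i)))\<^sup>2
              \<le> (norm (\<chi> i. sqrt (hh $ i) * (y $ i - a $ i)))\<^sup>2))"

text \<open>ZO-AdaMM state: zo_adamm_state ... k = (x_{k+1}, m_k, v_k, vhat_k).
  f t is f_t, u t is the direction u_t, alpha t, beta1 t the step sizes / momentum.\<close>
fun zo_adamm_state ::
  "(nat \<Rightarrow> real ^ 'n \<Rightarrow> real) \<Rightarrow> (real ^ 'n) set \<Rightarrow> real \<Rightarrow> (nat \<Rightarrow> real) \<Rightarrow> (nat \<Rightarrow> real) \<Rightarrow> real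
   \<Rightarrow> real ^ 'n \<Rightarrow> real ^ 'n \<Rightarrow> real ^ 'n \<Rightarrow> real ^ 'n \<Rightarrow> (nat \<Rightarrow> real ^ 'n) \<Rightarrow> nat
   \<Rightarrow> (real ^ 'n) \<times> (real ^ 'n) \<times> (real ^ 'n) \<times> (real ^ 'n)" where
  "zo_adamm_state f X mu alpha beta1 beta2 x1 m0 v0 vh0 u 0 = (x1, m0, v0, vh0)"
| "zo_adamm_state f X mu alpha beta1 beta2 x1 m0 v0 vh0 u (Suc k) =
    (let (x, m, v, vh) = zo_adamm_state f X mu alpha beta1 beta2 x1 m0 v0 vh0 u k;
         t = Suc k;
         g = zo_grad mu (f t) x (u t);
         m' = beta1 t *\<^sub>R m + (1 - beta1 t) *\<^sub>R g;
         v' = beta2 *\<^sub>R v + (1 - beta2) *\<^sub>R (\<chi> i. (g $ i)\<^sup>2);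
         vh' = (\<chi> i. max (vh $ i) (v' $ i));
         x' = wproj X (\<chi> i. sqrt (vh' $ i))
                (x - alpha t *\<^sub>R (\<chi> i. m' $ i / sqrt (vh' $ i)))
     in (x', m', v', vh'))"

definition zo_adamm_grad where
  "zo_adamm_grad f X mu alpha beta1 beta2 x1 m0 v0 vh0 u t =
     zo_grad mu (f t) (fst (zo_adamm_state f X mu alpha beta1 beta2 x1 m0 v0 vh0 u (t - 1))) (u t)"

end

theory Submission imports Defs begin

text \<open>Each estimate is \<open>(d/\<mu>) (f\<^sub>t(x\<^sub>t + \<mu> u\<^sub>t) - f\<^sub>t(x\<^sub>t)) u\<^sub>t\<close>. For a uniform direction \<open>u\<close> on the sphere,
  \<open>P(|u\<^sub>i| > s) \<le> 2 exp(-d s\<^sup>2/2)\<close> by K. Ball's cap estimate: the double cone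
  \<open>{x \<in> ball 0 1. |x\<^sub>i| \<ge> s |x|}\<close> is covered by two balls of radius at most \<open>exp(-s\<^sup>2/2)\<close>.
  With \<open>s = 2 sqrt(ln(dT/\<delta>)/d)\<close> this is at most \<open>\<delta>/(dT)\<close>, and a union bound over the
  \<open>dT\<close> pairs \<open>(t, i)\<close> concludes.\<close>

lemma inverse_four_mult_le_exp_neg:
  fixes y :: real
  assumes "1/2 \<le> y" "y \<le> 1"
  shows "1 / (4 * y) \<le> exp (- y)"
proof -
  have exp_half: "exp (1/2 :: real) \<le> 2"
  proof (rule power2_le_imp_le)
    have "exp (1/2 :: real) ^ 2 = exp 1" by (simp flip: exp_of_nat_mult)
    also have "\<dots> \<le> 2 ^ 2" using exp_le by simp
    finally show "exp (1/2 :: real) ^ 2 \<le> 2 ^ 2" .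
  qed simp
  have "3/2 - y \<le> exp (- (y - 1/2))" using exp_ge_add_one_self[of "- (y - 1/2)"] by simp
  have "exp y = exp (1/2) / exp (- (y - 1/2))" by (simp add: exp_minus field_simps flip: exp_add)
  also have "\<dots> \<le> 2 / (3/2 - y)"
    using exp_half \<open>3/2 - y \<le> exp (- (y - 1/2))\<close> assms by (intro frac_le) auto
  also have "\<dots> \<le> 4 * y"
    using assms mult_nonneg_nonneg[of "2 * y - 1" "1 - y"]
    by (simp add: divide_le_eq algebra_simps)
  finally show ?thesis using assms by (simp add: exp_minus field_simps)
qed

text \<open>On the cap \<open>{x \<in> ball 0 1. x \<bullet> e \<ge> s |x|}\<close> one has
  \<open>|x - c e|\<^sup>2 \<le> |x| (1 - 2 c s) + c\<^sup>2\<close>, so the centre \<open>c e\<close> is chosen to make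
  \<open>max(c\<^sup>2, 1 - 2 c s + c\<^sup>2)\<close> small.\<close>

definition cap_centre :: "real \<Rightarrow> real" where
  "cap_centre s = (if s\<^sup>2 \<le> 1/2 then s else 1 / (2 * s))"

definition cap_radius :: "real \<Rightarrow> real" where
  "cap_radius s = (if s\<^sup>2 \<le> 1/2 then sqrt (1 - s\<^sup>2) else 1 / (2 * s))"

lemma cap_radius_nonneg: "0 \<le> s \<Longrightarrow> 0 \<le> cap_radius s"
  by (auto simp: cap_radius_def)

lemma cap_radius_power_le:
  assumes "0 \<le> s" "s \<le> 1"
  shows "cap_radius s ^ n \<le> exp (- real n * s\<^sup>2 / 2)"
proof -
  have "(cap_radius s)\<^sup>2 \<le> exp (- s\<^sup>2)"
  proof (cases "s\<^sup>2 \<le> 1/2")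
    case True
    then show ?thesis using exp_ge_add_one_self[of "- s\<^sup>2"] by (simp add: cap_radius_def)
  next
    case False
    have "s\<^sup>2 \<le> 1" using assms by (simp add: power_le_one)
    then have "1 / (4 * s\<^sup>2) \<le> exp (- s\<^sup>2)"
      using False by (intro inverse_four_mult_le_exp_neg) auto
    then show ?thesis using False by (simp add: cap_radius_def power_divide power_mult_distrib)
  qed
  also have "\<dots> = (exp (- s\<^sup>2 / 2))\<^sup>2" by (simp flip: exp_of_nat_mult)
  finally have "cap_radius s \<le> exp (- s\<^sup>2 / 2)" by (rule power2_le_imp_le) simp
  then have "cap_radius s ^ n \<le> exp (- s\<^sup>2 / 2) ^ n"
    using cap_radius_nonneg assms by (intro power_mono) auto
  also have "\<dots> = exp (- real n * s\<^sup>2 / 2)" by (simp flip: exp_of_nat_mult)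
  finally show ?thesis .
qed

lemma cone_cap_subset_cball:
  fixes x e :: "'a::real_inner"
  assumes s: "0 \<le> s" "s \<le> 1" and "norm x \<le> 1" and "norm e = 1"
    and cone: "s * norm x \<le> x \<bullet> e"
  shows "x \<in> cball (cap_centre s *\<^sub>R e) (cap_radius s)"
proof -
  let ?c = "cap_centre s" and ?r = "norm x"
  have "?c \<ge> 0" using s by (auto simp: cap_centre_def)
  have "e \<bullet> e = 1" using \<open>norm e = 1\<close> by (simp add: dot_square_norm)
  have "(norm (x - ?c *\<^sub>R e))\<^sup>2 = ?r\<^sup>2 - 2 * ?c * (x \<bullet> e) + ?c\<^sup>2"
    using \<open>e \<bullet> e = 1\<close>
    by (simp add: power2_norm_eq_inner inner_diff_left inner_diff_right inner_commute
        power2_eq_square[of ?c] algebra_simps)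
  also have "\<dots> \<le> ?r * (1 - 2 * ?c * s) + ?c\<^sup>2"
    using \<open>?c \<ge> 0\<close> cone mult_left_mono[OF cone, of "2 * ?c"] \<open>norm x \<le> 1\<close>
      mult_left_le[of ?r ?r]
    by (simp add: power2_eq_square algebra_simps)
  also have "\<dots> \<le> (cap_radius s)\<^sup>2"
  proof (cases "s\<^sup>2 \<le> 1/2")
    case True
    then have "?r * (1 - 2 * s * s) \<le> 1 - 2 * s * s"
      using \<open>norm x \<le> 1\<close> by (intro mult_left_le_one_le) (auto simp: power2_eq_square)
    then show ?thesis using True by (simp add: cap_centre_def cap_radius_def power2_eq_square)
  next
    case False
    then have "s > 0" using s by (cases "s = 0") auto
    then show ?thesis using False by (simp add: cap_centre_def cap_radius_def)
  qed
  finally have "norm (x - ?c *\<^sub>R e) \<le> cap_radius s"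
    using cap_radius_nonneg[OF s(1)] by (rule power2_le_imp_le)
  then show ?thesis by (simp add: dist_norm norm_minus_commute)
qed

lemma measure_ball_inter_cone_le:
  fixes e :: "'a::euclidean_space"
  assumes "norm e = 1" "0 \<le> s" "s \<le> 1"
  shows "measure lborel (ball 0 1 \<inter> {x. s * norm x \<le> \<bar>x \<bullet> e\<bar>})
           \<le> 2 * cap_radius s ^ DIM('a) * measure lborel (ball (0::'a) 1)"
proof -
  let ?cap = "\<lambda>e. cball (cap_centre s *\<^sub>R e) (cap_radius s) :: 'a set"
  have "ball 0 1 \<inter> {x. s * norm x \<le> \<bar>x \<bullet> e\<bar>} \<subseteq> ?cap e \<union> ?cap (- e)"
  proof
    fix x assume "x \<in> ball 0 1 \<inter> {x. s * norm x \<le> \<bar>x \<bullet> e\<bar>}"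
    then have "norm x \<le> 1" "s * norm x \<le> x \<bullet> e \<or> s * norm x \<le> x \<bullet> (- e)"
      by (auto simp: abs_if split: if_splits)
    then show "x \<in> ?cap e \<union> ?cap (- e)"
      by (metis UnI1 UnI2 assms cone_cap_subset_cball norm_minus_cancel)
  qed
  then have "measure lborel (ball 0 1 \<inter> {x. s * norm x \<le> \<bar>x \<bullet> e\<bar>})
      \<le> measure lborel (?cap e \<union> ?cap (- e))"
    by (intro measure_mono_fmeasurable) (auto intro!: fmeasurable.Un fmeasurable_compact)
  also have "\<dots> \<le> measure lborel (?cap e) + measure lborel (?cap (- e))"
    by (rule measure_Un_le) auto
  also have "\<dots> = 2 * cap_radius s ^ DIM('a) * measure lborel (ball (0::'a) 1)"
    using cap_radius_nonneg[OF assms(2)] by (simp add: content_cball content_ball)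
  finally show ?thesis .
qed

lemma unit_ball_vol_neq_0: "unit_ball_vol (real n) \<noteq> 0"
  using unit_ball_vol_pos[of "real n"] by (metis of_nat_0_le_iff order_less_irrefl)

lemma measure_uniform_ball_cone_le:
  fixes e :: "'a::euclidean_space"
  assumes "norm e = 1" "0 \<le> s" "s \<le> 1"
  shows "measure (uniform_measure lborel (ball (0::'a) 1)) {x. s * norm x \<le> \<bar>x \<bullet> e\<bar>}
           \<le> 2 * exp (- real DIM('a) * s\<^sup>2 / 2)"
proof -
  have vol_pos: "0 < unit_ball_vol (real DIM('a))" by (rule unit_ball_vol_pos) simp
  have "measure (uniform_measure lborel (ball (0::'a) 1)) {x. s * norm x \<le> \<bar>x \<bullet> e\<bar>}
          = measure lborel (ball 0 1 \<inter> {x. s * norm x \<le> \<bar>x \<bullet> e\<bar>}) / measure lborel (ball (0::'a) 1)"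
    by (intro measure_uniform_measure) (auto simp: emeasure_ball unit_ball_vol_neq_0)
  also have "\<dots> \<le> 2 * cap_radius s ^ DIM('a)"
    using measure_ball_inter_cone_le[OF assms] vol_pos by (simp add: content_ball divide_le_eq)
  also have "\<dots> \<le> 2 * exp (- real DIM('a) * s\<^sup>2 / 2)"
    using cap_radius_power_le[OF assms(2,3)] by simp
  finally show ?thesis .
qed

lemma prob_space_uniform_unit_ball: "prob_space (uniform_measure lborel (ball (0::'a::euclidean_space) 1))"
  by (rule prob_space_uniform_measure) (simp_all add: emeasure_ball unit_ball_vol_neq_0)

lemma prob_space_unif_sphere: "prob_space unif_sphere"
  unfolding unif_sphere_def
  by (rule prob_space.prob_space_distr[OF prob_space_uniform_unit_ball]) simp

lemma unif_sphere_tail_le: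
  fixes e :: "real^'n"
  assumes "norm e = 1" "0 \<le> s"
  shows "measure unif_sphere {v. 1 < norm v \<or> s < \<bar>v \<bullet> e\<bar>} \<le> 2 * exp (- real CARD('n) * s\<^sup>2 / 2)"
proof -
  let ?U = "uniform_measure lborel (ball (0::real^'n) 1)"
  let ?S = "{v. 1 < norm v \<or> s < \<bar>v \<bullet> e\<bar>}"
  let ?C = "{x. s * norm x \<le> \<bar>x \<bullet> e\<bar>}"
  let ?preimage = "(\<lambda>x. x /\<^sub>R norm x) -` ?S \<inter> space ?U"
  interpret U: prob_space ?U by (rule prob_space_uniform_unit_ball)
  have "measure unif_sphere ?S = measure ?U ?preimage"
    unfolding unif_sphere_def by (rule measure_distr) simp_all
  also have "\<dots> \<le> 2 * exp (- real CARD('n) * s\<^sup>2 / 2)"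
  proof (cases "s \<le> 1")
    case True
    have "?preimage \<subseteq> ?C"
      using \<open>0 \<le> s\<close> by (auto simp: field_simps abs_mult)
    moreover have "?C \<in> sets borel" by measurable
    ultimately have "measure ?U ?preimage \<le> measure ?U ?C"
      by (intro U.finite_measure_mono) simp_all
    with measure_uniform_ball_cone_le[OF assms True] show ?thesis by simp
  next
    case False
    have normalized_le_1: "norm (x /\<^sub>R norm x) \<le> 1" for x :: "real^'n"
      by (cases "x = 0") simp_all
    have "\<not> (1 < norm (x /\<^sub>R norm x) \<or> s < \<bar>(x /\<^sub>R norm x) \<bullet> e\<bar>)" for x
      using normalized_le_1[of x] Cauchy_Schwarz_ineq2[of "x /\<^sub>R norm x" e, unfolded assms(1)] False
      by linarith
    then have "?preimage = {}" by blast
    then show ?thesis by simp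
  qed
  finally show ?thesis .
qed

lemma (in prob_space) prob_avoid_finite_Union_ge:
  fixes \<epsilon> :: real
  assumes "finite I" "\<And>i. i \<in> I \<Longrightarrow> E i \<in> events"
    and "\<And>i. i \<in> I \<Longrightarrow> prob (E i) \<le> \<epsilon>"
  shows "prob (space M - (\<Union>i\<in>I. E i)) \<ge> 1 - card I * \<epsilon>"
proof -
  have union: "(\<Union>i\<in>I. E i) \<in> events" using assms(1,2) by auto
  have "prob (\<Union>i\<in>I. E i) \<le> (\<Sum>i\<in>I. prob (E i))"
    using assms(1,2) by (intro finite_measure_subadditive_finite) auto
  also have "\<dots> \<le> card I * \<epsilon>"
    using sum_mono[of I "\<lambda>i. prob (E i)" "\<lambda>_. \<epsilon>"] assms(3) by simp
  finally show ?thesis using prob_compl[OF union] by simp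
qed

lemma unif_sphere_directions_bounded:
  fixes I :: "'i set" and s :: real
  assumes "finite I" "0 \<le> s"
  defines "P \<equiv> PiM I (\<lambda>_. unif_sphere :: (real^'n) measure)"
  shows "\<exists>A \<in> sets P. measure P A \<ge> 1 - 2 * card I * CARD('n) * exp (- real CARD('n) * s\<^sup>2 / 2)
           \<and> (\<forall>u\<in>A. \<forall>t\<in>I. norm (u t) \<le> 1 \<and> infnorm (u t) \<le> s)"
proof -
  interpret P: prob_space P unfolding P_def by (intro prob_space_PiM prob_space_unif_sphere)
  define S where "S b = {v :: real^'n. 1 < norm v \<or> s < \<bar>v \<bullet> b\<bar>}" for b
  define E where "E p = {u \<in> space P. u (fst p) \<in> S (snd p)}" for p
  have S_sets: "S b \<in> sets unif_sphere" for b
    unfolding S_def unif_sphere_def by measurable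
  have E_events: "E (t, b) \<in> P.events" if "t \<in> I" for t b
    using that S_sets unfolding E_def P_def by simp measurable
  have tail: "P.prob (E (t, b)) \<le> 2 * exp (- real CARD('n) * s\<^sup>2 / 2)" if "t \<in> I" "b \<in> Basis" for t b
  proof -
    have component: "(\<lambda>u. u t) \<in> P \<rightarrow>\<^sub>M unif_sphere"
      unfolding P_def using that by measurable
    have "P.prob (E (t, b)) = measure (distr P unif_sphere (\<lambda>u. u t)) (S b)"
      unfolding E_def by (simp add: measure_distr[OF component S_sets] Int_def conj_commute)
    also have "distr P unif_sphere (\<lambda>u. u t) = unif_sphere"
      unfolding P_def using that by (intro distr_PiM_component prob_space_unif_sphere)
    finally show ?thesis
      using unif_sphere_tail_le[of b s] that assms(2) unfolding S_def by simp
  qed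
  define A where "A = space P - (\<Union>p\<in>I \<times> Basis. E p)"
  have "A \<in> P.events"
    unfolding A_def using assms(1) E_events by (intro sets.Diff sets.finite_UN) auto
  moreover have "P.prob A \<ge> 1 - card (I \<times> (Basis :: (real^'n) set)) * (2 * exp (- real CARD('n) * s\<^sup>2 / 2))"
    unfolding A_def using assms(1) E_events tail by (intro P.prob_avoid_finite_Union_ge) auto
  moreover have "norm (u t) \<le> 1 \<and> infnorm (u t) \<le> s" if "u \<in> A" "t \<in> I" for u t
    using that unfolding A_def
    by (auto simp: E_def S_def infnorm_Max not_less) (use SOME_Basis in blast)
  ultimately show ?thesis
    by (intro bexI[of _ A]) (auto simp: card_cartesian_product mult_ac)
qed

lemma infnorm_zo_grad_le:
  fixes h :: "real^'n \<Rightarrow> real" and Lc mu :: real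
  assumes "Lc-lipschitz_on UNIV h" "0 < mu" "norm u \<le> 1"
  shows "infnorm (zo_grad mu h x u) \<le> CARD('n) * Lc * infnorm u"
proof -
  have "0 \<le> Lc" using assms(1) by (rule lipschitz_on_nonneg)
  have "\<bar>h (x + mu *\<^sub>R u) - h x\<bar> \<le> Lc * dist (x + mu *\<^sub>R u) x"
    using lipschitz_onD[OF assms(1)] by (simp add: dist_real_def)
  also have "\<dots> = Lc * (mu * norm u)"
    using assms(2) by (simp add: dist_norm)
  also have "\<dots> \<le> Lc * mu"
    using \<open>0 \<le> Lc\<close> assms(2,3) mult_left_le[of "norm u" mu] by (intro mult_left_mono) auto
  finally have difference_quotient_le: "CARD('n) / mu * \<bar>h (x + mu *\<^sub>R u) - h x\<bar> \<le> CARD('n) * Lc"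
    using assms(2) by (simp add: divide_le_eq mult_ac)
  have "infnorm (zo_grad mu h x u) = (CARD('n) / mu * \<bar>h (x + mu *\<^sub>R u) - h x\<bar>) * infnorm u"
    using assms(2) by (simp add: zo_grad_def infnorm_mul abs_mult)
  also have "\<dots> \<le> CARD('n) * Lc * infnorm u"
    using difference_quotient_le infnorm_pos_le by (rule mult_right_mono)
  finally show ?thesis .
qed

lemma two_mult_exp_neg_two_ln_le:
  fixes N \<delta> :: real
  assumes "2 \<le> N" "0 < \<delta>" "\<delta> < 1"
  shows "2 * N * exp (- 2 * ln (N / \<delta>)) \<le> \<delta>"
proof -
  have "exp (- 2 * ln (N / \<delta>)) = inverse (exp (ln (N / \<delta>)) * exp (ln (N / \<delta>)))"
    by (simp only: exp_minus mult_2 exp_add mult_minus_left)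
  also have "\<dots> = (\<delta> / N)\<^sup>2"
    using assms by (simp add: power2_eq_square)
  finally have "2 * N * exp (- 2 * ln (N / \<delta>)) = \<delta> * (2 * \<delta> / N)"
    using assms by (simp add: power2_eq_square)
  also have "\<dots> \<le> \<delta>"
    using assms by (intro mult_left_le) (auto simp: divide_le_eq)
  finally show ?thesis .
qed

lemma sqrt_log_threshold:
  fixes d N \<delta> :: real
  assumes "1 \<le> d" "2 \<le> N" "0 < \<delta>" "\<delta> < 1"
  defines "s \<equiv> 2 * sqrt (ln (N / \<delta>) / d)"
  shows "0 \<le> s" "2 * N * exp (- d * s\<^sup>2 / 2) \<le> \<delta>" "d * s = 2 * sqrt (d * ln (N / \<delta>))"
proof -
  let ?L = "ln (N / \<delta>)"
  have "0 \<le> ?L" using assms(2-4) by (simp add: le_divide_eq)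
  then show "0 \<le> s" unfolding s_def using assms(1) by simp
  have "d * s\<^sup>2 / 2 = 2 * ?L"
    unfolding s_def using \<open>0 \<le> ?L\<close> assms(1) by (simp add: power_mult_distrib)
  then show "2 * N * exp (- d * s\<^sup>2 / 2) \<le> \<delta>"
    using two_mult_exp_neg_two_ln_le[OF assms(2-4)] by simp
  have "sqrt (d * ?L) = sqrt (d\<^sup>2 * (?L / d))" using assms(1) by (simp add: power2_eq_square)
  also have "\<dots> = d * sqrt (?L / d)" unfolding real_sqrt_mult using assms(1) by simp
  finally show "d * s = 2 * sqrt (d * ?L)" unfolding s_def by simp
qed

lemma unif_sphere_directions_small:
  fixes I :: "'i set" and \<delta> :: real
  assumes "finite I" "2 \<le> CARD('n) * card I" "0 < \<delta>" "\<delta> < 1"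
  defines "P \<equiv> PiM I (\<lambda>_. unif_sphere :: (real^'n) measure)"
  shows "\<exists>A \<in> sets P. measure P A \<ge> 1 - \<delta> \<and> (\<forall>u\<in>A. \<forall>t\<in>I. norm (u t) \<le> 1 \<and>
           CARD('n) * infnorm (u t) \<le> 2 * sqrt (CARD('n) * ln (CARD('n) * card I / \<delta>)))"
proof -
  let ?d = "real CARD('n)"
  define s where "s = 2 * sqrt (ln (?d * card I / \<delta>) / ?d)"
  have "2 \<le> ?d * card I" using assms(2) by (simp flip: of_nat_mult)
  then have threshold: "0 \<le> s" "2 * (card I * ?d) * exp (- ?d * s\<^sup>2 / 2) \<le> \<delta>"
      "?d * s = 2 * sqrt (?d * ln (?d * card I / \<delta>))"
    using sqrt_log_threshold[of ?d "?d * card I" \<delta>] assms(3,4) unfolding s_def by (auto simp: mult_ac)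
  obtain A where "A \<in> sets P" and "measure P A \<ge> 1 - 2 * (card I * ?d) * exp (- ?d * s\<^sup>2 / 2)"
    and "\<forall>u\<in>A. \<forall>t\<in>I. norm (u t) \<le> 1 \<and> infnorm (u t) \<le> s"
    using unif_sphere_directions_bounded[where 'n = 'n, OF assms(1) threshold(1)] unfolding P_def by (auto simp: mult_ac)
  then show ?thesis
    using threshold(2,3) by (intro bexI[of _ A]) (auto simp flip: threshold(3))
qed

theorem proposition3:
  fixes f :: "nat \<Rightarrow> real ^ 'n \<Rightarrow> real"
    and X :: "(real ^ 'n) set"
    and x1 m0 v0 vh0 :: "real ^ 'n"
    and mu Lc beta2 delta :: real
    and alpha beta1 :: "nat \<Rightarrow> real"
    and T :: nat
  assumes "closed X" and "convex X" and "x1 \<in> X"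
    and "mu > 0"
    and "\<And>t. beta1 t \<in> {0<..1}" and "beta2 \<in> {0<..1}"
    and "\<And>t. Lc-lipschitz_on UNIV (f t)"
    and "max CARD('n) T \<ge> 3"
    and "delta \<in> {0<..<1}"
  shows "\<exists>A \<in> sets (PiM {1..T} (\<lambda>_. unif_sphere)).
           measure (PiM {1..T} (\<lambda>_. unif_sphere)) A \<ge> 1 - delta \<and>
           (\<forall>u\<in>A. \<forall>t\<in>{1..T}.
              infnorm (zo_adamm_grad f X mu alpha beta1 beta2 x1 m0 v0 vh0 u t)
                \<le> 2 * Lc * sqrt (real CARD('n) * ln (real CARD('n) * real T / delta)))"
proof (cases "T = 0")
  case True
  then obtain A where "A \<in> sets (PiM {1..T} (\<lambda>_. unif_sphere :: (real^'n) measure))"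
    and "measure (PiM {1..T} (\<lambda>_. unif_sphere)) A \<ge> 1"
    using unif_sphere_directions_bounded[of "{1..T}" 0] by auto
  then show ?thesis using True assms(9) by (intro bexI[of _ A]) auto
next
  case False
  let ?d = "real CARD('n)"
  have "CARD('n) \<le> CARD('n) * T" "T \<le> CARD('n) * T" using False by simp_all
  then have "3 \<le> CARD('n) * T" using assms(8) unfolding le_max_iff_disj by (elim disjE) linarith+
  then have "2 \<le> CARD('n) * card {1..T}" by simp
  then obtain A where "A \<in> sets (PiM {1..T} (\<lambda>_. unif_sphere :: (real^'n) measure))"
    and "measure (PiM {1..T} (\<lambda>_. unif_sphere)) A \<ge> 1 - delta"
    and directions: "\<forall>u\<in>A. \<forall>t\<in>{1..T}. norm (u t) \<le> 1 \<and>
                       ?d * infnorm (u t) \<le> 2 * sqrt (?d * ln (?d * real T / delta))"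
    using unif_sphere_directions_small[where 'n = 'n, of "{1..T}" delta] assms(9) by auto
  moreover have "infnorm (zo_adamm_grad f X mu alpha beta1 beta2 x1 m0 v0 vh0 u t)
      \<le> 2 * Lc * sqrt (?d * ln (?d * real T / delta))" if "u \<in> A" "t \<in> {1..T}" for u t
  proof -
    have "infnorm (zo_adamm_grad f X mu alpha beta1 beta2 x1 m0 v0 vh0 u t) \<le> Lc * (?d * infnorm (u t))"
      unfolding zo_adamm_grad_def using infnorm_zo_grad_le[OF assms(7,4)] directions that
      by (simp add: mult_ac)
    also have "\<dots> \<le> Lc * (2 * sqrt (?d * ln (?d * real T / delta)))"
      using directions that lipschitz_on_nonneg[OF assms(7)] by (intro mult_left_mono) auto
    finally show ?thesis by (simp add: mult_ac)
  qed
  ultimately show ?thesis by (intro bexI[of _ A]) auto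
qed

end
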